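(* Let $\mu\in(\mathbb Z^n_{\ge0})_+$, let $\ell\in[n]$ with $\ell\ge\ell(\mu)$, and let $F\in B(\varpi_\ell)$ be such that $F\otimes T^0_\mu$ is semistandard. Then $$\Psi_{F\otimes T^0_\mu}=t^{\ell(u_F)}(T_{u_F^{-1}})^{-1}\mathbf 1_{\varpi_\ell+\mu}.$$ In particular $\Psi_{T^0_\lambda}=\mathbf 1_\lambda$ for every $\lambda\in(\mathbb Z^n_{\ge0})_+$.
   Context: Fix $n\ge1$, $[n]=\{1,\dots,n\}$. $S_n$ with simple transpositions $s_i$ and length $\ell(\cdot)$ acts on $\mathbb Z^n$ by permuting coordinates; $\varpi_k=\varepsilon_1+\dots+\varepsilon_k$. $(\mathbb Z^n_{\ge0})_+=\{\lambda\in\mathbb Z^n_{\ge0}:\lambda_1\ge\dots\ge\lambda_n\}$, $\ell(\mu)$ = number of nonzero parts. $S_{n,\lambda}$ is the stabilizer of $\lambda$. The affine Hecke algebra $H$ is the $\mathbb Z[t^{\pm1}]$-algebra with generators $T_1,\dots,T_{n-1},X_1^{\pm1},\dots,X_n^{\pm1}$ and relations $T_i^2=(t-1)T_i+t$, $T_iT_{i+1}T_i=T_{i+1}T_iT_{i+1}$, $T_iT_j=T_jT_i$ ($|i-j|>1$), $X_iX_j=X_jX_i$, $T_iX_iT_i=tX_{i+1}$, $T_iX_j=X_jT_i$ ($j\notin\{i,i+1\}$). $T_w=T_{i_1}\cdots T_{i_m}$ for a reduced word of $w$. $H_n=\mathrm{span}\{T_w:w\in S_n\}$, $H_{n,\lambda}=\mathrm{span}\{T_w:w\in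 S_{n,\lambda}\}$, $\mathbf 1_\lambda=\sum_{w\in S_{n,\lambda}}T_w$. Columns: $B(\varpi_\ell)$ is the set of $C=(c_1<\dots<c_\ell)\subseteq[n]$; $u_C\in S_n$ sends $k\mapsto c_k$ ($k\le\ell$) and sends $\ell+1,\dots,n$ increasingly onto $[n]\setminus C$. Tensors $T=C_r\otimes\cdots\otimes C_1$ ($C_i\in B(\varpi_{\ell_i})$, $\ell_1\le\dots\le\ell_r$) are fillings of the Young diagram of $\sum\varpi_{\ell_i}$ with columns $C_r,\dots,C_1$ left to right; semistandard means rows weakly increase left to right. For $\mu\in(\mathbb Z^n_{\ge0})_+$, $T^0_\mu$ is the tableau of shape $\mu$ whose row $i$ is filled with $i$ (all columns equal to $(1,\dots,m)$); $T^0_0$ is empty and $F\otimes T^0_0=F$. $\Psi$: each $h\in H_n$ is uniquely $\sum_{F\in B(\varpi_\ell)}T_{u_F}h_F$ with $h_F\in H_{n,\varpi_\ell}$. For a column $C\in B(\varpi_\ell)$, $\Psi_C=t^{\ell(u_C)}(T_{u_C^{-1}})^{-1}\mathbf 1_{\varpi_\ell}$; for $T=C\otimes S$ ($C\in B(\varpi_\ell)$, $S$ with columns of length $\le\ell$), write $\Psi_S=\sum_{E\in B(\varpi_\ell)}T_{u_E}h_{E,S}$ ($h_{E,S}\in H_{n,\varpi_\ell}$) and set $\Psi_T=t^{\ell(u_C)}(T_{u_C^{-1}})^{-1}h_{C,S}$. *)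

theory Defs
  imports "HOL-Combinatorics.Permutations" "HOL-Library.Function_Algebras"
begin

text \<open>The symmetric group S_n is the set of permutations of {1..n},
  as functions nat => nat fixing everything outside {1..n}; the group product is
  function composition.  Elements of the finite Hecke algebra H_n over a commutative
  ring 'a (with parameter t) are coefficient functions (nat => nat) => 'a supported
  on S_n: h corresponds to the sum over w of (h w) T_w.\<close>

type_synonym perm = "nat \<Rightarrow> nat"
type_synonym 'a hecke = "perm \<Rightarrow> 'a"

definition perms :: "nat \<Rightarrow> perm set" where
  "perms n = {w. w permutes {1..n}}"

definition len :: "nat \<Rightarrow> perm \<Rightarrow> nat" where
  "len n w = card {(i, j). 1 \<le> i \<and> i < j \<and> j \<le> n \<and> w j < w i}"

definition sref :: "nat \<Rightarrow> perm" where
  "sref i = transpose i (Suc i)"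

definition Hn :: "nat \<Rightarrow> 'a::zero hecke set" where
  "Hn n = {h. \<forall>w. w \<notin> perms n \<longrightarrow> h w = 0}"

definition Tb :: "perm \<Rightarrow> 'a::{zero,one} hecke" where
  "Tb w = (\<lambda>v. if v = w then 1 else 0)"

definition sc :: "'a::times \<Rightarrow> 'a hecke \<Rightarrow> 'a hecke" where
  "sc c h = (\<lambda>v. c * h v)"

text \<open>left multiplication by the generator T_i, using
  T_i T_w = T_{s_i w} if l(s_i w) > l(w), and (t-1) T_w + t T_{s_i w} otherwise\<close>
definition gen_mul :: "nat \<Rightarrow> 'a::comm_ring_1 \<Rightarrow> nat \<Rightarrow> 'a hecke \<Rightarrow> 'a hecke" where
  "gen_mul n t i h = (\<Sum>w\<in>perms n. sc (h w)
      (if len n w < len n (sref i \<circ> w) then Tb (sref i \<circ> w)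
       else sc (t - 1) (Tb w) + sc t (Tb (sref i \<circ> w))))"

text \<open>a reduced word for w (fuel = length): w = s_i o w' with l(w') = l(w) - 1\<close>
fun rword :: "nat \<Rightarrow> nat \<Rightarrow> perm \<Rightarrow> nat list" where
  "rword n 0 w = []"
| "rword n (Suc k) w =
     (let i = (LEAST i. 1 \<le> i \<and> i < n \<and> len n (sref i \<circ> w) < len n w)
      in i # rword n k (sref i \<circ> w))"

definition Tw_mul :: "nat \<Rightarrow> 'a::comm_ring_1 \<Rightarrow> perm \<Rightarrow> 'a hecke \<Rightarrow> 'a hecke" where
  "Tw_mul n t w g = foldr (gen_mul n t) (rword n (len n w) w) g"

definition hmul :: "nat \<Rightarrow> 'a::comm_ring_1 \<Rightarrow> 'a hecke \<Rightarrow> 'a hecke \<Rightarrow> 'a hecke" where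
  "hmul n t h g = (\<Sum>w\<in>perms n. sc (h w) (Tw_mul n t w g))"

definition hinv :: "nat \<Rightarrow> 'a::comm_ring_1 \<Rightarrow> 'a hecke \<Rightarrow> 'a hecke" where
  "hinv n t h = (THE g. g \<in> Hn n \<and> hmul n t h g = Tb id \<and> hmul n t g h = Tb id)"

text \<open>weights lambda in Z^n_{>=0} as functions on the indices 1..n\<close>
definition dominant :: "nat \<Rightarrow> (nat \<Rightarrow> nat) \<Rightarrow> bool" where
  "dominant n lam \<longleftrightarrow> (\<forall>i j. 1 \<le> i \<and> i \<le> j \<and> j \<le> n \<longrightarrow> lam j \<le> lam i)"

definition partlen :: "nat \<Rightarrow> (nat \<Rightarrow> nat) \<Rightarrow> nat" where
  "partlen n mu = card {i\<in>{1..n}. mu i \<noteq> 0}"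

definition varpi :: "nat \<Rightarrow> nat \<Rightarrow> nat" where
  "varpi l i = (if i \<le> l then 1 else 0)"

definition stab :: "nat \<Rightarrow> (nat \<Rightarrow> nat) \<Rightarrow> perm set" where
  "stab n lam = {w \<in> perms n. \<forall>i\<in>{1..n}. lam (w i) = lam i}"

definition Hsub :: "nat \<Rightarrow> (nat \<Rightarrow> nat) \<Rightarrow> 'a::zero hecke set" where
  "Hsub n lam = {h. \<forall>w. w \<notin> stab n lam \<longrightarrow> h w = 0}"

definition onew :: "nat \<Rightarrow> (nat \<Rightarrow> nat) \<Rightarrow> 'a::comm_ring_1 hecke" where
  "onew n lam = (\<Sum>w\<in>stab n lam. Tb w)"

text \<open>columns B(varpi_l): strictly increasing lists of length l in {1..n}\<close>
definition cols :: "nat \<Rightarrow> nat \<Rightarrow> nat list set" where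
  "cols n l = {c. sorted_wrt (<) c \<and> set c \<subseteq> {1..n} \<and> length c = l}"

definition ucol :: "nat \<Rightarrow> nat list \<Rightarrow> perm" where
  "ucol n c = (\<lambda>k. if 1 \<le> k \<and> k \<le> n
       then (c @ sorted_list_of_set ({1..n} - set c)) ! (k - 1) else k)"

definition hcomp :: "nat \<Rightarrow> 'a::comm_ring_1 \<Rightarrow> nat \<Rightarrow> 'a hecke \<Rightarrow> nat list \<Rightarrow> 'a hecke" where
  "hcomp n t l h C = (THE x. \<exists>hF. (\<forall>F\<in>cols n l. hF F \<in> Hsub n (varpi l)) \<and>
       h = (\<Sum>F\<in>cols n l. hmul n t (Tb (ucol n F)) (hF F)) \<and> x = hF C)"

text \<open>Tensors of columns are lists of columns, read left to right (C_r first).\<close>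
fun Psi :: "nat \<Rightarrow> 'a::comm_ring_1 \<Rightarrow> nat list list \<Rightarrow> 'a hecke" where
  "Psi n t [] = onew n (\<lambda>_. 0)"
| "Psi n t [C] = sc (t ^ len n (ucol n C))
      (hmul n t (hinv n t (Tb (inv (ucol n C)))) (onew n (varpi (length C))))"
| "Psi n t (C # S) = sc (t ^ len n (ucol n C))
      (hmul n t (hinv n t (Tb (inv (ucol n C)))) (hcomp n t (length C) (Psi n t S) C))"

definition semistandard :: "nat list list \<Rightarrow> bool" where
  "semistandard cs \<longleftrightarrow> (\<forall>j j' k. j < j' \<and> j' < length cs \<and> k < length (cs ! j')
       \<longrightarrow> k < length (cs ! j) \<and> cs ! j ! k \<le> cs ! j' ! k)"

text \<open>T^0_mu: column j (j = 1..mu_1) is [1..mu'_j]\<close>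
definition T0 :: "nat \<Rightarrow> (nat \<Rightarrow> nat) \<Rightarrow> nat list list" where
  "T0 n mu = map (\<lambda>j. [1..<card {i\<in>{1..n}. j \<le> mu i} + 1]) [1..<mu 1 + 1]"

end

theory Submission
  imports Defs
begin

text \<open>Write \<open>h \<in> H\<^sub>n\<close> as \<open>\<Sum>\<^sub>F T\<^bsub>u\<^sub>F\<^esub> h\<^sub>F\<close> with \<open>h\<^sub>F \<in> H\<^bsub>n,\<varpi>\<^sub>l\<^esub>\<close>. The
  \<open>u\<^sub>F\<close> are minimal coset representatives: for \<open>v \<in> S\<^bsub>n,\<varpi>\<^sub>l\<^esub>\<close> the lengths of \<open>u\<^sub>F\<close>
  and \<open>v\<close> add up, so \<open>T\<^bsub>u\<^sub>F\<^esub> T\<^sub>v = T\<^bsub>u\<^sub>F v\<^esub>\<close>, and since every \<open>w \<in> S\<^sub>n\<close>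
  factors uniquely as \<open>u\<^sub>F v\<close>, the component \<open>h\<^sub>C\<close> is the restriction of
  \<open>v \<mapsto> h(u\<^sub>C v)\<close> to \<open>S\<^bsub>n,\<varpi>\<^sub>l\<^esub>\<close>. For \<open>h = \<one>\<^sub>\<mu>\<close> with \<open>u\<^sub>C \<in> S\<^bsub>n,\<mu>\<^esub>\<close>
  this restriction is the indicator of \<open>S\<^bsub>n,\<varpi>\<^sub>l\<^esub> \<inter> S\<^bsub>n,\<mu>\<^esub> = S\<^bsub>n,\<varpi>\<^sub>l+\<mu>\<^esub>\<close>,
  i.e. \<open>\<one>\<^bsub>\<varpi>\<^sub>l+\<mu>\<^esub>\<close>. Semistandardness of \<open>F \<otimes> T\<^sup>0\<^sub>\<mu>\<close> makes \<open>F\<close> begin with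
  \<open>1, \<dots>, \<ell>(\<mu>)\<close>, so \<open>u\<^sub>F\<close> fixes the support of \<open>\<mu>\<close> and lies in \<open>S\<^bsub>n,\<mu>\<^esub>\<close>.
  The same computation with \<open>u = id\<close> gives \<open>\<Psi>\<^bsub>T\<^sup>0\<^sub>\<lambda>\<^esub> = \<one>\<^sub>\<lambda>\<close> by induction on
  the number of columns.\<close>

section \<open>Arithmetic in the finite Hecke algebra\<close>

lemma sum_fun_apply: "(\<Sum>x\<in>A. f x) y = (\<Sum>x\<in>A. f x y)"
  by (induction A rule: infinite_finite_induct) auto

lemma sc_apply: "sc c h x = c * h x"
  by (simp add: sc_def)

lemma sc_one [simp]: "sc 1 (h :: 'a::monoid_mult hecke) = h"
  by (simp add: sc_def)

lemma Tb_apply: "Tb w v = (if v = w then 1 else 0)"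
  by (simp add: Tb_def)

lemma finite_perms [simp]: "finite (perms n)"
  using finite_permutations[of "{1..n}"] by (simp add: perms_def)

lemma finite_stab [simp]: "finite (stab n lam)"
  by (rule finite_subset[of _ "perms n"]) (auto simp: stab_def)

lemma finite_cols [simp]: "finite (cols n l)"
  by (rule finite_subset[OF _ finite_lists_length_eq[of "{1..n}" l]]) (auto simp: cols_def)

lemma sum_sc_Tb_delta:
  assumes "finite A" "x \<in> A"
  shows "(\<Sum>w\<in>A. sc (Tb x w) (g w)) = (g x :: 'a::comm_ring_1 hecke)"
proof -
  have "(\<Sum>w\<in>A. sc (Tb x w) (g w)) = (\<Sum>w\<in>A. if w = x then g w else 0)"
    by (rule sum.cong) (auto simp: Tb_def sc_def func_zero)
  also have "\<dots> = g x" using assms by (simp add: sum.delta')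
  finally show ?thesis .
qed

lemma gen_mul_sum:
  assumes "finite V"
  shows "gen_mul n t i (\<Sum>v\<in>V. sc (c v) (g v)) = (\<Sum>v\<in>V. sc (c v) (gen_mul n t i (g v)))"
proof
  fix x
  define X where "X w = (if len n w < len n (sref i \<circ> w) then Tb (sref i \<circ> w)
       else sc (t - 1) (Tb w) + sc t (Tb (sref i \<circ> w)))" for w :: perm
  have "gen_mul n t i (\<Sum>v\<in>V. sc (c v) (g v)) x
      = (\<Sum>w\<in>perms n. \<Sum>v\<in>V. c v * (g v w * X w x))"
    by (simp add: gen_mul_def X_def sum_fun_apply sc_apply sum_distrib_right mult.assoc)
  also have "\<dots> = (\<Sum>v\<in>V. sc (c v) (gen_mul n t i (g v))) x"
    by (subst sum.swap) (simp add: gen_mul_def X_def sum_fun_apply sc_apply sum_distrib_left)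
  finally show "gen_mul n t i (\<Sum>v\<in>V. sc (c v) (g v)) x = (\<Sum>v\<in>V. sc (c v) (gen_mul n t i (g v))) x" .
qed

lemma Tw_mul_sum:
  assumes "finite V"
  shows "Tw_mul n t w (\<Sum>v\<in>V. sc (c v) (g v)) = (\<Sum>v\<in>V. sc (c v) (Tw_mul n t w (g v)))"
proof -
  have "foldr (gen_mul n t) is (\<Sum>v\<in>V. sc (c v) (g v))
      = (\<Sum>v\<in>V. sc (c v) (foldr (gen_mul n t) is (g v)))" for "is"
    by (induction "is") (simp_all add: gen_mul_sum[OF assms])
  then show ?thesis by (simp add: Tw_mul_def)
qed

lemma hmul_Tb: "u \<in> perms n \<Longrightarrow> hmul n t (Tb u) g = Tw_mul n t u g"
  unfolding hmul_def by (rule sum_sc_Tb_delta) simp_all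

lemma gen_mul_Tb:
  assumes "x \<in> perms n"
  shows "gen_mul n t i (Tb x) = (if len n x < len n (sref i \<circ> x) then Tb (sref i \<circ> x)
       else sc (t - 1) (Tb x) + sc t (Tb (sref i \<circ> x)))"
  unfolding gen_mul_def using assms by (rule sum_sc_Tb_delta[OF finite_perms])

lemma Hsub_eq_sum:
  fixes h :: "'a::comm_ring_1 hecke"
  assumes "h \<in> Hsub n lam"
  shows "h = (\<Sum>v\<in>stab n lam. sc (h v) (Tb v))"
proof
  fix x
  have "(\<Sum>v\<in>stab n lam. sc (h v) (Tb v)) x = (\<Sum>v\<in>stab n lam. if v = x then h v else 0)"
    unfolding sum_fun_apply sc_apply Tb_apply by (rule sum.cong) auto
  also have "\<dots> = h x" using assms by (auto simp: sum.delta' Hsub_def)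
  finally show "h x = (\<Sum>v\<in>stab n lam. sc (h v) (Tb v)) x" by simp
qed

lemma onew_apply: "onew n lam x = (if x \<in> stab n lam then 1 else 0)"
  unfolding onew_def by (simp add: sum_fun_apply Tb_apply sum.delta')

section \<open>Permutations of \<open>{1..n}\<close> and their length\<close>

lemma perms_in_iff: "w \<in> perms n \<Longrightarrow> w x \<in> {1..n} \<longleftrightarrow> x \<in> {1..n}"
  unfolding perms_def mem_Collect_eq by (rule permutes_in_image)

lemma perms_out: "w \<in> perms n \<Longrightarrow> x \<notin> {1..n} \<Longrightarrow> w x = x"
  by (simp add: perms_def permutes_not_in)

lemma perms_inv_apply: "w \<in> perms n \<Longrightarrow> inv w (w x) = x"
  by (simp add: perms_def permutes_inverses)

lemma perms_apply_inv: "w \<in> perms n \<Longrightarrow> w (inv w x) = x"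
  by (simp add: perms_def permutes_inverses)

lemma perms_eq_iff: "w \<in> perms n \<Longrightarrow> w x = w y \<longleftrightarrow> x = y"
  by (metis perms_inv_apply)

lemma perms_inv: "w \<in> perms n \<Longrightarrow> inv w \<in> perms n"
  by (simp add: perms_def permutes_inv)

lemma perms_comp: "u \<in> perms n \<Longrightarrow> v \<in> perms n \<Longrightarrow> u \<circ> v \<in> perms n"
  by (simp add: perms_def permutes_compose)

lemma id_perms [simp]: "id \<in> perms n"
  by (simp add: perms_def permutes_id)

lemma sref_perms: "1 \<le> i \<Longrightarrow> i < n \<Longrightarrow> sref i \<in> perms n"
  unfolding perms_def sref_def mem_Collect_eq by (rule permutes_swap_id) auto

lemma sref_sref: "sref i \<circ> (sref i \<circ> w) = w"
  by (auto simp: sref_def)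

definition inversions :: "nat \<Rightarrow> perm \<Rightarrow> (nat \<times> nat) set" where
  "inversions n w = {(i, j). 1 \<le> i \<and> i < j \<and> j \<le> n \<and> w j < w i}"

lemma len_eq_card_inversions: "len n w = card (inversions n w)"
  by (simp add: len_def inversions_def)

lemma finite_inversions [simp]: "finite (inversions n w)"
  by (rule finite_subset[of _ "{1..n} \<times> {1..n}"]) (auto simp: inversions_def)

lemma len_id [simp]: "len n id = 0"
proof -
  have "inversions n id = {}" by (auto simp: inversions_def)
  then show ?thesis by (simp add: len_eq_card_inversions)
qed

text \<open>An inversion \<open>(i, j)\<close> of \<open>u \<circ> v\<close> is either an inversion of \<open>v\<close> or,
  after sorting, the \<open>v\<close>-image of an inversion of \<open>u\<close>.\<close>
lemma len_comp_le:
  assumes u: "u \<in> perms n" and v: "v \<in> perms n"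
  shows "len n (u \<circ> v) \<le> len n u + len n v"
proof -
  define g where "g = (\<lambda>(p, q). (min (inv v p) (inv v q), max (inv v p) (inv v q)))"
  have "inversions n (u \<circ> v) \<subseteq> inversions n v \<union> g ` inversions n u"
  proof
    fix x assume "x \<in> inversions n (u \<circ> v)"
    then obtain i j where ij: "x = (i, j)" "1 \<le> i" "i < j" "j \<le> n" "u (v j) < u (v i)"
      by (auto simp: inversions_def)
    show "x \<in> inversions n v \<union> g ` inversions n u"
    proof (cases "v j < v i")
      case True
      then show ?thesis using ij by (auto simp: inversions_def)
    next
      case False
      then have "v i < v j" using perms_eq_iff[OF v, of i j] ij by auto
      moreover have "v i \<in> {1..n}" "v j \<in> {1..n}" using ij perms_in_iff[OF v] by auto
      ultimately have "(v i, v j) \<in> inversions n u" using ij by (auto simp: inversions_def)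
      moreover have "g (v i, v j) = (i, j)" using ij by (simp add: g_def perms_inv_apply[OF v])
      ultimately show ?thesis using ij by force
    qed
  qed
  then have "card (inversions n (u \<circ> v)) \<le> card (inversions n v \<union> g ` inversions n u)"
    by (rule card_mono[rotated]) simp
  also have "\<dots> \<le> card (inversions n v) + card (g ` inversions n u)"
    by (rule card_Un_le)
  also have "\<dots> \<le> card (inversions n v) + card (inversions n u)"
    using card_image_le[OF finite_inversions, of g n u] by simp
  finally show ?thesis by (simp add: len_eq_card_inversions)
qed

text \<open>Left multiplication by \<open>s\<^sub>i\<close> toggles exactly the inversion formed by the
  positions of the values \<open>i\<close> and \<open>i + 1\<close>.\<close>
lemma len_sref:
  assumes w: "w \<in> perms n" and i: "1 \<le> i" "i < n"
  shows "len n (sref i \<circ> w) = (if inv w (Suc i) < inv w i then len n w - 1 else Suc (len n w))"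
proof -
  define a where "a = inv w i"
  define b where "b = inv w (Suc i)"
  have wa: "\<And>p. w p = i \<longleftrightarrow> p = a" unfolding a_def using w by (metis perms_inv_apply perms_apply_inv)
  have wb: "\<And>p. w p = Suc i \<longleftrightarrow> p = b" unfolding b_def using w by (metis perms_inv_apply perms_apply_inv)
  have ab: "a \<noteq> b" by (metis n_not_Suc_n wa wb)
  have wa': "w a = i" and wb': "w b = Suc i" using wa wb by auto
  then have an: "a \<in> {1..n}" "b \<in> {1..n}" using perms_in_iff[OF w, of a] perms_in_iff[OF w, of b] i by auto
  define P where "P = (min a b, max a b)"
  have unchanged: "sref i (w q) < sref i (w p) \<longleftrightarrow> w q < w p" if "(p, q) \<noteq> P" "p < q" for p q
  proof -
    have "w p \<noteq> w q" using that perms_eq_iff[OF w] by auto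
    moreover have "\<not> (w p \<in> {i, Suc i} \<and> w q \<in> {i, Suc i})"
      using that wa wb ab unfolding P_def by (auto simp: min_def max_def)
    ultimately show ?thesis unfolding sref_def transpose_def by auto
  qed
  have eq: "inversions n (sref i \<circ> w) - {P} = inversions n w - {P}"
    using unchanged by (auto simp: inversions_def)
  have P_w: "P \<in> inversions n w \<longleftrightarrow> b < a"
    using an wa' wb' ab by (auto simp: P_def inversions_def min_def max_def)
  have P_sref: "P \<in> inversions n (sref i \<circ> w) \<longleftrightarrow> \<not> b < a"
    using an wa' wb' ab by (auto simp: P_def inversions_def min_def max_def sref_def)
  show ?thesis
  proof (cases "b < a")
    case True
    then have "inversions n (sref i \<circ> w) = inversions n w - {P}" using eq P_w P_sref by blast
    then show ?thesis using True P_w by (simp add: len_eq_card_inversions a_def b_def)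
  next
    case False
    then have "inversions n (sref i \<circ> w) = insert P (inversions n w)" using eq P_w P_sref by blast
    then show ?thesis using False P_w by (simp add: len_eq_card_inversions a_def b_def)
  qed
qed

lemma len_sref_le: "w \<in> perms n \<Longrightarrow> 1 \<le> i \<Longrightarrow> i < n \<Longrightarrow> len n (sref i \<circ> w) \<le> Suc (len n w)"
  by (auto simp: len_sref)

lemma perms_eq_id_if_len_0:
  assumes w: "w \<in> perms n" and "len n w = 0"
  shows "w = id"
proof (rule ccontr)
  assume "w \<noteq> id"
  then have "\<exists>k. w k \<noteq> k" by auto
  define k where "k = (LEAST k. w k \<noteq> k)"
  have wk: "w k \<noteq> k" unfolding k_def by (rule LeastI_ex) fact
  have below: "w i = i" if "i < k" for i
    using not_less_Least[of i "\<lambda>k. w k \<noteq> k"] that by (auto simp: k_def)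
  have k: "k \<in> {1..n}" using wk perms_out[OF w] by blast
  have "\<not> w k < k" using below[of "w k"] wk perms_eq_iff[OF w, of "w k" k] by auto
  then have up: "k < w k" using wk by simp
  define j where "j = inv w k"
  have wj: "w j = k" by (simp add: j_def perms_apply_inv[OF w])
  have "j \<noteq> k" using wj wk by auto
  moreover have "\<not> j < k" using below[of j] wj by auto
  moreover have "j \<le> n" using k perms_in_iff[OF w, of j] wj by auto
  ultimately have "(k, j) \<in> inversions n w" using k wj up by (auto simp: inversions_def)
  then show False using assms(2) by (auto simp: len_eq_card_inversions)
qed

lemma exists_descent:
  assumes w: "w \<in> perms n" and "0 < len n w"
  obtains i where "1 \<le> i" "i < n" "inv w (Suc i) < inv w i"
proof -
  obtain p q where pq: "1 \<le> p" "p < q" "q \<le> n" "w q < w p"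
    using assms(2) by (auto simp: len_eq_card_inversions inversions_def card_gt_0_iff)
  have range: "1 \<le> w q" "w p \<le> n"
    using pq perms_in_iff[OF w, of q] perms_in_iff[OF w, of p] by auto
  have "\<exists>i. 1 \<le> i \<and> i < n \<and> inv w (Suc i) < inv w i"
  proof (rule ccontr)
    assume none: "\<not> ?thesis"
    have ascent: "inv w k \<le> inv w (Suc k)" if "w q \<le> k" "k < w p" for k
    proof -
      have "1 \<le> k" "k < n" using that range by linarith+
      then show ?thesis using none by (auto simp: not_less)
    qed
    have "inv w (w q) \<le> inv w k" if "w q \<le> k" "k \<le> w p" for k
      using that
    proof (induction k rule: dec_induct)
      case (step k)
      then show ?case using ascent[of k] by simp
    qed simp
    from this[of "w p"] have "q \<le> p" using pq(4) by (simp add: perms_inv_apply[OF w])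
    then show False using pq by simp
  qed
  then show ?thesis using that by blast
qed

lemma rword_Suc:
  assumes w: "w \<in> perms n" and lw: "len n w = Suc k"
  obtains i where "1 \<le> i" "i < n" "len n (sref i \<circ> w) = k"
    and "rword n (Suc k) w = i # rword n k (sref i \<circ> w)"
proof -
  define Q where "Q i \<longleftrightarrow> 1 \<le> i \<and> i < n \<and> len n (sref i \<circ> w) < len n w" for i
  obtain i0 where "1 \<le> i0" "i0 < n" "inv w (Suc i0) < inv w i0"
    using exists_descent[OF w] lw by auto
  then have "Q i0" using len_sref[OF w] lw by (simp add: Q_def)
  define i where "i = (LEAST i. Q i)"
  have "Q i" unfolding i_def by (rule LeastI) fact
  then have i: "1 \<le> i" "i < n" and "len n (sref i \<circ> w) < Suc k"
    using lw by (auto simp: Q_def)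
  then have "len n (sref i \<circ> w) = k"
    using len_sref[OF w i] lw by (auto split: if_splits)
  moreover have "rword n (Suc k) w = i # rword n k (sref i \<circ> w)"
    by (simp add: i_def Q_def Let_def)
  ultimately show ?thesis using that i by blast
qed

lemma gen_mul_Tb_ascent:
  assumes "x \<in> perms n" "len n x < len n (sref i \<circ> x)"
  shows "gen_mul n t i (Tb x) = Tb (sref i \<circ> x)"
  using gen_mul_Tb[OF assms(1), of t i] assms(2) by simp

lemma len_sref_comp_additive:
  assumes w: "w \<in> perms n" and v: "v \<in> perms n" and i: "1 \<le> i" "i < n"
    and down: "len n (sref i \<circ> w) < len n w" and add: "len n (w \<circ> v) = len n w + len n v"
  shows "len n (sref i \<circ> w \<circ> v) = len n (sref i \<circ> w) + len n v"
proof -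
  have w': "sref i \<circ> w \<in> perms n" by (rule perms_comp[OF sref_perms[OF i] w])
  have "len n (sref i \<circ> w) = len n w - 1" using down len_sref[OF w i] by (auto split: if_splits)
  moreover have "sref i \<circ> (sref i \<circ> w \<circ> v) = w \<circ> v" by (simp add: o_assoc[symmetric] sref_sref)
  then have "len n (w \<circ> v) \<le> Suc (len n (sref i \<circ> w \<circ> v))"
    using len_sref_le[OF perms_comp[OF w' v] i] by simp
  moreover have "len n (sref i \<circ> w \<circ> v) \<le> len n (sref i \<circ> w) + len n v"
    by (rule len_comp_le[OF w' v])
  ultimately show ?thesis using add down by linarith
qed

lemma Tw_mul_Tb:
  assumes "w \<in> perms n" "v \<in> perms n" "len n (w \<circ> v) = len n w + len n v"
  shows "Tw_mul n t w (Tb v) = Tb (w \<circ> v)"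
proof -
  have "foldr (gen_mul n t) (rword n k w) (Tb v) = Tb (w \<circ> v)"
    if "w \<in> perms n" "len n w = k" "len n (w \<circ> v) = len n w + len n v" for k w
    using that
  proof (induction k arbitrary: w)
    case 0
    then have "w = id" by (simp add: perms_eq_id_if_len_0)
    then show ?case by simp
  next
    case (Suc k)
    obtain i where i: "1 \<le> i" "i < n" and len_si_w: "len n (sref i \<circ> w) = k"
      and rw: "rword n (Suc k) w = i # rword n k (sref i \<circ> w)"
      using rword_Suc[OF Suc.prems(1,2)] .
    define w' where "w' = sref i \<circ> w"
    have w': "w' \<in> perms n" unfolding w'_def by (rule perms_comp[OF sref_perms[OF i] Suc.prems(1)])
    have len': "len n w' = k" using len_si_w by (simp add: w'_def)
    have add: "len n (w' \<circ> v) = len n w' + len n v"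
      unfolding w'_def
      by (rule len_sref_comp_additive[OF Suc.prems(1) assms(2) i _ Suc.prems(3)])
        (simp add: Suc.prems(2) len_si_w)
    have undo: "sref i \<circ> (w' \<circ> v) = w \<circ> v" by (simp add: w'_def o_assoc[symmetric] sref_sref)
    have up: "len n (w' \<circ> v) < len n (sref i \<circ> (w' \<circ> v))"
      unfolding undo using add Suc.prems(2,3) len' by linarith
    have "foldr (gen_mul n t) (rword n (Suc k) w) (Tb v)
        = gen_mul n t i (foldr (gen_mul n t) (rword n k w') (Tb v))"
      by (simp only: rw w'_def foldr_Cons comp_apply)
    also have "foldr (gen_mul n t) (rword n k w') (Tb v) = Tb (w' \<circ> v)"
      by (rule Suc.IH[OF w' len' add])
    also have "gen_mul n t i (Tb (w' \<circ> v)) = Tb (sref i \<circ> (w' \<circ> v))"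
      by (rule gen_mul_Tb_ascent[OF perms_comp[OF w' assms(2)] up])
    finally show ?case by (simp only: undo)
  qed
  then show ?thesis using assms by (simp add: Tw_mul_def)
qed

lemma hmul_Tb_id [simp]: "hmul n t (Tb id) g = g"
  by (simp add: hmul_Tb Tw_mul_def)

lemma hinv_Tb_id: "hinv n t (Tb id :: 'a::comm_ring_1 hecke) = Tb id"
  unfolding hinv_def by (rule the_equality) (simp_all add: Hn_def Tb_apply)

section \<open>Stabilisers and the elements \<open>\<one>\<^sub>\<lambda>\<close>\<close>

lemma stab_perms: "v \<in> stab n lam \<Longrightarrow> v \<in> perms n"
  by (simp add: stab_def)

lemma id_stab: "id \<in> stab n lam"
  by (simp add: stab_def)

lemma stab_inv:
  assumes v: "v \<in> stab n lam"
  shows "inv v \<in> stab n lam"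
proof -
  have vp: "v \<in> perms n" using v by (rule stab_perms)
  have "lam (inv v i) = lam i" if "i \<in> {1..n}" for i
    using v that perms_in_iff[OF perms_inv[OF vp], of i] perms_apply_inv[OF vp, of i]
    by (auto simp: stab_def) (metis atLeastAtMost_iff)
  then show ?thesis using perms_inv[OF vp] by (simp add: stab_def)
qed

lemma stab_comp_iff:
  assumes u: "u \<in> stab n mu" and v: "v \<in> perms n"
  shows "u \<circ> v \<in> stab n mu \<longleftrightarrow> v \<in> stab n mu"
proof -
  have "mu (u (v i)) = mu (v i)" if "i \<in> {1..n}" for i
    using u perms_in_iff[OF v, of i] that by (auto simp: stab_def)
  then show ?thesis using perms_comp[OF stab_perms[OF u] v] v by (auto simp: stab_def)
qed

lemma stab_cong:
  assumes "\<forall>i\<in>{1..n}. f i = g i"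
  shows "stab n f = stab n g"
  using assms perms_in_iff by (auto simp: stab_def)

lemma onew_cong:
  assumes "\<forall>i\<in>{1..n}. f i = g i"
  shows "onew n f = onew n g"
  unfolding onew_def by (simp add: stab_cong[OF assms])

lemma onew_in_Hn: "onew n lam \<in> Hn n"
  by (auto simp: Hn_def onew_apply stab_def)

lemma stab_if_fixes_support:
  assumes w: "w \<in> perms n" and fixed: "\<forall>i\<in>{1..n}. mu i \<noteq> 0 \<longrightarrow> w i = i"
  shows "w \<in> stab n mu"
proof -
  have "mu (w i) = mu i" if i: "i \<in> {1..n}" for i
  proof (cases "mu i = 0")
    case True
    have "w i \<in> {1..n}" using perms_in_iff[OF w] i by simp
    then have "mu (w i) \<noteq> 0 \<Longrightarrow> w (w i) = w i" using fixed by blast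
    then show ?thesis using True perms_eq_iff[OF w, of "w i" i] by auto
  next
    case False
    then show ?thesis using fixed i by simp
  qed
  then show ?thesis using w by (simp add: stab_def)
qed

lemma stab_varpi_iff:
  "v \<in> stab n (varpi l) \<longleftrightarrow> v \<in> perms n \<and> (\<forall>i\<in>{1..n}. v i \<le> l \<longleftrightarrow> i \<le> l)"
  by (auto simp: stab_def varpi_def split: if_splits)

lemma stab_varpi_image:
  assumes v: "v \<in> stab n (varpi l)" and "l \<le> n"
  shows "v ` {1..l} = {1..l}"
proof -
  have vp: "v \<in> perms n" and vb: "\<And>i. i \<in> {1..n} \<Longrightarrow> v i \<le> l \<longleftrightarrow> i \<le> l"
    using v by (auto simp: stab_varpi_iff)
  have "v ` {1..l} \<subseteq> {1..l}"
    using vb perms_in_iff[OF vp] \<open>l \<le> n\<close> by fastforce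
  moreover have "inj_on v {1..l}" using perms_eq_iff[OF vp] by (auto simp: inj_on_def)
  ultimately show ?thesis by (intro endo_inj_surj) auto
qed

lemma stab_varpi_plus:
  assumes mu: "\<forall>i\<in>{1..n}. l < i \<longrightarrow> mu i = 0"
  shows "stab n (\<lambda>i. varpi l i + mu i) = stab n (varpi l) \<inter> stab n mu"
proof (intro set_eqI iffI)
  fix w assume w: "w \<in> stab n (\<lambda>i. varpi l i + mu i)"
  have wp: "w \<in> perms n" using w by (rule stab_perms)
  have eq: "varpi l (w i) + mu (w i) = varpi l i + mu i" if "i \<in> {1..n}" for i
    using w that by (simp add: stab_def)
  have "varpi l (w i) = varpi l i" if i: "i \<in> {1..n}" for i
  proof -
    have "w i \<in> {1..n}" using perms_in_iff[OF wp] i by simp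
    then show ?thesis using eq[OF i] mu[rule_format, of i] mu[rule_format, of "w i"] i
      by (auto simp: varpi_def split: if_splits)
  qed
  then show "w \<in> stab n (varpi l) \<inter> stab n mu" using eq wp by (auto simp: stab_def)
qed (auto simp: stab_def)

section \<open>Minimal coset representatives\<close>

lemma colsD:
  assumes "E \<in> cols n l"
  shows "sorted_wrt (<) E" "set E \<subseteq> {1..n}" "length E = l" "distinct E" "card (set E) = l"
    "l \<le> n"
proof -
  show s: "sorted_wrt (<) E" "set E \<subseteq> {1..n}" "length E = l" using assms by (auto simp: cols_def)
  then show "distinct E" by (simp add: strict_sorted_iff)
  then show c: "card (set E) = l" using s by (simp add: distinct_card)
  have "card (set E) \<le> card {1..n}" using s by (intro card_mono) auto
  then show "l \<le> n" using c by simp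
qed

definition ucol_list :: "nat \<Rightarrow> nat list \<Rightarrow> nat list" where
  "ucol_list n E = E @ sorted_list_of_set ({1..n} - set E)"

lemma ucol_list_perm:
  assumes "E \<in> cols n l"
  shows "length (ucol_list n E) = n" "distinct (ucol_list n E)" "set (ucol_list n E) = {1..n}"
proof -
  note E = colsD[OF assms]
  have "card ({1..n} - set E) = n - l" using E by (simp add: card_Diff_subset)
  then show "length (ucol_list n E) = n" using E by (simp add: ucol_list_def)
  show "distinct (ucol_list n E)" "set (ucol_list n E) = {1..n}"
    using E by (auto simp: ucol_list_def)
qed

lemma ucol_apply: "1 \<le> k \<Longrightarrow> k \<le> n \<Longrightarrow> ucol n E k = ucol_list n E ! (k - 1)"
  by (simp add: ucol_def ucol_list_def)

lemma ucol_out: "\<not> (1 \<le> k \<and> k \<le> n) \<Longrightarrow> ucol n E k = k"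
  unfolding ucol_def by auto

lemma ucol_apply_le:
  assumes "E \<in> cols n l" "1 \<le> k" "k \<le> l"
  shows "ucol n E k = E ! (k - 1)"
  using assms colsD[OF assms(1)] by (simp add: ucol_apply ucol_list_def nth_append_left)

lemma ucol_apply_gt:
  assumes "E \<in> cols n l" "l < k" "k \<le> n"
  shows "ucol n E k = sorted_list_of_set ({1..n} - set E) ! (k - 1 - l)"
  using assms colsD[OF assms(1)] by (simp add: ucol_apply ucol_list_def nth_append_right)

lemma ucol_perms:
  assumes E: "E \<in> cols n l"
  shows "ucol n E \<in> perms n"
proof -
  note L = ucol_list_perm[OF E]
  have inj: "inj_on (ucol n E) {1..n}"
  proof (rule inj_onI)
    fix x y assume "x \<in> {1..n}" "y \<in> {1..n}" "ucol n E x = ucol n E y"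
    then have "ucol_list n E ! (x - 1) = ucol_list n E ! (y - 1)" "x - 1 < n" "y - 1 < n"
      by (auto simp: ucol_apply)
    then have "x - 1 = y - 1" using L nth_eq_iff_index_eq by metis
    then show "x = y" using \<open>x \<in> {1..n}\<close> \<open>y \<in> {1..n}\<close> by auto
  qed
  have "ucol n E ` {1..n} \<subseteq> {1..n}"
  proof
    fix y assume "y \<in> ucol n E ` {1..n}"
    then obtain x where "x \<in> {1..n}" "y = ucol_list n E ! (x - 1)" by (auto simp: ucol_apply)
    then have "y \<in> set (ucol_list n E)" using L(1) by auto
    then show "y \<in> {1..n}" using L(3) by simp
  qed
  then have "ucol n E ` {1..n} = {1..n}" using inj by (intro endo_inj_surj) simp_all
  then have "bij_betw (ucol n E) {1..n} {1..n}" using inj by (simp add: bij_betw_def)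
  then have "ucol n E permutes {1..n}" by (rule bij_imp_permutes) (simp add: ucol_out)
  then show ?thesis by (simp add: perms_def)
qed

lemma ucol_less:
  assumes E: "E \<in> cols n l" and "1 \<le> i" "i < j" "j \<le> n" "j \<le> l \<or> l < i"
  shows "ucol n E i < ucol n E j"
proof (cases "j \<le> l")
  case True
  then show ?thesis
    using assms sorted_wrt_nth_less[OF colsD(1)[OF E], of "i - 1" "j - 1"] colsD(3)[OF E]
    by (simp add: ucol_apply_le)
next
  case False
  define R where "R = sorted_list_of_set ({1..n} - set E)"
  have "length R = n - l" using colsD[OF E] by (simp add: R_def card_Diff_subset)
  moreover have "sorted_wrt (<) R" unfolding R_def by (rule strict_sorted_list_of_set)
  ultimately have "R ! (i - 1 - l) < R ! (j - 1 - l)"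
    using assms False sorted_wrt_nth_less[of "(<)" R "i - 1 - l" "j - 1 - l"] by simp
  then show ?thesis using assms False by (simp add: ucol_apply_gt R_def)
qed

lemma ucol_image:
  assumes E: "E \<in> cols n l"
  shows "ucol n E ` {1..l} = set E"
proof
  note D = colsD[OF E]
  show "ucol n E ` {1..l} \<subseteq> set E" using D by (auto simp: ucol_apply_le[OF E])
  show "set E \<subseteq> ucol n E ` {1..l}"
  proof
    fix y assume "y \<in> set E"
    then obtain k where k: "k < l" "E ! k = y" using D by (auto simp: in_set_conv_nth)
    then have "ucol n E (k + 1) = y" using ucol_apply_le[OF E, of "k + 1"] by simp
    then show "y \<in> ucol n E ` {1..l}" using k by force
  qed
qed

lemma inversions_stab_varpi:
  assumes "v \<in> stab n (varpi l)" "(i, j) \<in> inversions n v"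
  shows "j \<le> l \<or> l < i"
proof (rule ccontr)
  assume "\<not> (j \<le> l \<or> l < i)"
  moreover have "1 \<le> i" "i < j" "j \<le> n" "v j < v i" using assms(2) by (auto simp: inversions_def)
  moreover have "\<forall>k\<in>{1..n}. v k \<le> l \<longleftrightarrow> k \<le> l" using assms(1) by (simp add: stab_varpi_iff)
  ultimately have "v i \<le> l" "\<not> v j \<le> l" by auto
  then show False using \<open>v j < v i\<close> by simp
qed

lemma inversions_ucol:
  assumes "E \<in> cols n l" "(i, j) \<in> inversions n (ucol n E)"
  shows "i \<le> l \<and> l < j"
  using assms ucol_less[OF assms(1), of i j] by (force simp: inversions_def)

lemma inversions_subset_ucol_comp:
  assumes E: "E \<in> cols n l" and v: "v \<in> stab n (varpi l)"
  shows "inversions n v \<subseteq> inversions n (ucol n E \<circ> v)"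
proof
  fix x assume x: "x \<in> inversions n v"
  then obtain i j where ij: "x = (i, j)" "1 \<le> i" "i < j" "j \<le> n" "v j < v i"
    by (auto simp: inversions_def)
  have vp: "v \<in> perms n" using v by (rule stab_perms)
  have vb: "\<And>i. i \<in> {1..n} \<Longrightarrow> v i \<le> l \<longleftrightarrow> i \<le> l"
    using v by (auto simp: stab_varpi_iff)
  have "v i \<le> l \<or> l < v j"
    using inversions_stab_varpi[OF v x[unfolded ij(1)]] vb[of i] vb[of j] ij by auto
  then have "ucol n E (v j) < ucol n E (v i)"
    using ij ucol_less[OF E, of "v j" "v i"] perms_in_iff[OF vp, of i] perms_in_iff[OF vp, of j]
    by auto
  then show "x \<in> inversions n (ucol n E \<circ> v)" using ij by (auto simp: inversions_def)
qed

text \<open>Every inversion of \<open>u\<^sub>E \<circ> v\<close> lies either inside a block (an inversion of \<open>v\<close>)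
  or across the blocks (an inversion of \<open>u\<^sub>E\<close>, transported by \<open>v\<inverse>\<close>).\<close>
lemma len_ucol_comp:
  assumes E: "E \<in> cols n l" and v: "v \<in> stab n (varpi l)"
  shows "len n (ucol n E \<circ> v) = len n (ucol n E) + len n v"
proof -
  define u where "u = ucol n E"
  have u: "u \<in> perms n" unfolding u_def by (rule ucol_perms[OF E])
  have vp: "v \<in> perms n" using v by (rule stab_perms)
  have vib: "\<And>i. i \<in> {1..n} \<Longrightarrow> inv v i \<le> l \<longleftrightarrow> i \<le> l"
    using stab_inv[OF v] by (auto simp: stab_varpi_iff)
  define g where "g = (\<lambda>(p, q). (inv v p, inv v q))"
  have within: "inversions n v \<subseteq> inversions n (u \<circ> v)"
    unfolding u_def by (rule inversions_subset_ucol_comp[OF E v])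
  have across: "g ` inversions n u \<subseteq> inversions n (u \<circ> v)"
  proof
    fix x assume "x \<in> g ` inversions n u"
    then obtain p q where pq: "(p, q) \<in> inversions n u" "x = (inv v p, inv v q)" by (auto simp: g_def)
    have "1 \<le> p" "p \<le> l" "l < q" "q \<le> n" "u q < u p"
      using pq inversions_ucol[OF E, of p q] by (auto simp: inversions_def u_def)
    moreover have "inv v p \<in> {1..n}" "inv v q \<in> {1..n}"
      using calculation perms_in_iff[OF perms_inv[OF vp]] by auto
    ultimately show "x \<in> inversions n (u \<circ> v)"
      using pq vib[of p] vib[of q] by (auto simp: inversions_def perms_apply_inv[OF vp])
  qed
  have disjoint: "inversions n v \<inter> g ` inversions n u = {}"
  proof -
    have "\<not> (inv v q \<le> l \<or> l < inv v p)" if "(p, q) \<in> inversions n u" for p q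
      using inversions_ucol[OF E, of p q] that vib[of p] vib[of q] by (auto simp: u_def inversions_def)
    then show ?thesis using inversions_stab_varpi[OF v] by (fastforce simp: g_def)
  qed
  have g_inj: "inj_on g (inversions n u)"
    by (rule inj_onI) (auto simp: g_def perms_eq_iff[OF perms_inv[OF vp]])
  have "len n u + len n v = card (inversions n v \<union> g ` inversions n u)"
    using disjoint g_inj by (simp add: len_eq_card_inversions card_Un_disjoint card_image)
  also have "\<dots> \<le> len n (u \<circ> v)"
    using within across by (simp add: len_eq_card_inversions card_mono)
  finally show ?thesis using len_comp_le[OF u vp] by (simp add: u_def)
qed

lemma coset_decomp_exists:
  assumes l: "l \<le> n" and w: "w \<in> perms n"
  obtains E v where "E \<in> cols n l" "v \<in> stab n (varpi l)" "w = ucol n E \<circ> v"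
proof -
  define E where "E = sorted_list_of_set (w ` {1..l})"
  have "w ` {1..l} \<subseteq> {1..n}"
  proof (rule image_subsetI)
    fix x assume "x \<in> {1..l}"
    then show "w x \<in> {1..n}" using l perms_in_iff[OF w, of x] by auto
  qed
  moreover have "inj_on w {1..l}" using perms_eq_iff[OF w] by (auto simp: inj_on_def)
  ultimately have E: "E \<in> cols n l" by (auto simp: cols_def E_def card_image)
  define u where "u = ucol n E"
  have u: "u \<in> perms n" unfolding u_def by (rule ucol_perms[OF E])
  have uim: "u ` {1..l} = w ` {1..l}" using ucol_image[OF E] by (simp add: u_def E_def)
  define v where "v = inv u \<circ> w"
  have vp: "v \<in> perms n" unfolding v_def by (rule perms_comp[OF perms_inv[OF u] w])
  have uv: "u (v i) = w i" for i by (simp add: v_def perms_apply_inv[OF u])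
  have "v i \<le> l \<longleftrightarrow> i \<le> l" if i: "i \<in> {1..n}" for i
  proof
    assume "v i \<le> l"
    moreover have "1 \<le> v i" using perms_in_iff[OF vp, of i] i by auto
    ultimately have "w i \<in> w ` {1..l}" using uim uv[of i] by (metis atLeastAtMost_iff image_eqI)
    then obtain j where "j \<in> {1..l}" "w i = w j" by auto
    then show "i \<le> l" using perms_eq_iff[OF w, of i j] by auto
  next
    assume "i \<le> l"
    then have "w i \<in> u ` {1..l}" using uim i by auto
    then obtain j where "j \<in> {1..l}" "u j = w i" by auto
    then have "v i = j" using uv[of i] perms_eq_iff[OF u, of "v i" j] by simp
    then show "v i \<le> l" using \<open>j \<in> {1..l}\<close> by simp
  qed
  then have "v \<in> stab n (varpi l)" using vp by (simp add: stab_varpi_iff)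
  moreover have "w = u \<circ> v" using uv by auto
  ultimately show ?thesis using that E by (simp add: u_def)
qed

lemma coset_decomp_unique:
  assumes E: "E \<in> cols n l" and E': "E' \<in> cols n l"
    and v: "v \<in> stab n (varpi l)" and v': "v' \<in> stab n (varpi l)"
    and eq: "ucol n E \<circ> v = ucol n E' \<circ> v'"
  shows "E = E' \<and> v = v'"
proof -
  have l: "l \<le> n" using colsD(6)[OF E] .
  have "set E = (ucol n E \<circ> v) ` {1..l}"
    by (simp only: image_comp[symmetric] stab_varpi_image[OF v l] ucol_image[OF E])
  also have "\<dots> = set E'"
    by (simp only: eq image_comp[symmetric] stab_varpi_image[OF v' l] ucol_image[OF E'])
  finally have "E = E'" using strict_sorted_equal colsD(1)[OF E] colsD(1)[OF E'] by metis
  moreover have "v = v'"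
  proof
    fix x
    have "ucol n E (v x) = ucol n E (v' x)" using fun_cong[OF eq, of x] \<open>E = E'\<close> by simp
    then show "v x = v' x" using perms_eq_iff[OF ucol_perms[OF E]] by simp
  qed
  ultimately show ?thesis ..
qed

section \<open>Components of the parabolic decomposition\<close>

definition coset_sum :: "nat \<Rightarrow> 'a::comm_ring_1 \<Rightarrow> nat \<Rightarrow> (nat list \<Rightarrow> 'a hecke) \<Rightarrow> 'a hecke" where
  "coset_sum n t l h = (\<Sum>E\<in>cols n l. hmul n t (Tb (ucol n E)) (h E))"

lemma coset_sum_apply:
  assumes h: "\<forall>E\<in>cols n l. h E \<in> Hsub n (varpi l)"
  shows "coset_sum n t l h w
    = (\<Sum>E\<in>cols n l. \<Sum>v\<in>stab n (varpi l). if w = ucol n E \<circ> v then h E v else 0)"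
proof -
  have "hmul n t (Tb (ucol n E)) (h E) = (\<Sum>v\<in>stab n (varpi l). sc (h E v) (Tb (ucol n E \<circ> v)))"
    if E: "E \<in> cols n l" for E
  proof -
    have "hmul n t (Tb (ucol n E)) (h E)
        = Tw_mul n t (ucol n E) (\<Sum>v\<in>stab n (varpi l). sc (h E v) (Tb v))"
      using hmul_Tb[OF ucol_perms[OF E]] Hsub_eq_sum h E by metis
    also have "\<dots> = (\<Sum>v\<in>stab n (varpi l). sc (h E v) (Tw_mul n t (ucol n E) (Tb v)))"
      by (simp add: Tw_mul_sum)
    also have "\<dots> = (\<Sum>v\<in>stab n (varpi l). sc (h E v) (Tb (ucol n E \<circ> v)))"
      by (intro sum.cong refl arg_cong[where f = "sc _"] Tw_mul_Tb ucol_perms[OF E] stab_perms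
          len_ucol_comp[OF E])
    finally show ?thesis .
  qed
  then show ?thesis
    by (auto simp: coset_sum_def sum_fun_apply sc_apply Tb_apply intro!: sum.cong)
qed

lemma coset_sum_apply_coset:
  assumes h: "\<forall>E\<in>cols n l. h E \<in> Hsub n (varpi l)"
    and C: "C \<in> cols n l" and v0: "v0 \<in> stab n (varpi l)"
  shows "coset_sum n t l h (ucol n C \<circ> v0) = h C v0"
proof -
  have delta: "(if ucol n C \<circ> v0 = ucol n E \<circ> v then h E v else 0)
      = (if (E, v) = (C, v0) then h C v0 else 0)"
    if "E \<in> cols n l" "v \<in> stab n (varpi l)" for E v
  proof (cases "(E, v) = (C, v0)")
    case False
    then have "ucol n C \<circ> v0 \<noteq> ucol n E \<circ> v"
      using coset_decomp_unique[OF C that(1) v0 that(2)] by auto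
    then show ?thesis using False by auto
  qed auto
  have "coset_sum n t l h (ucol n C \<circ> v0)
      = (\<Sum>E\<in>cols n l. \<Sum>v\<in>stab n (varpi l). if (E, v) = (C, v0) then h C v0 else 0)"
    unfolding coset_sum_apply[OF h] by (simp only: delta cong: sum.cong)
  also have "\<dots> = (\<Sum>p\<in>cols n l \<times> stab n (varpi l). if p = (C, v0) then h C v0 else 0)"
    by (simp add: sum.cartesian_product case_prod_beta' prod_eq_iff)
  also have "\<dots> = h C v0"
    using C v0 by (simp add: sum.delta')
  finally show ?thesis .
qed

lemma coset_sum_apply_notin:
  assumes h: "\<forall>E\<in>cols n l. h E \<in> Hsub n (varpi l)" and w: "w \<notin> perms n"
  shows "coset_sum n t l h w = 0"
proof -
  have "w \<noteq> ucol n E \<circ> v" if "E \<in> cols n l" "v \<in> stab n (varpi l)" for E v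
    using w perms_comp[OF ucol_perms[OF that(1)] stab_perms[OF that(2)]] by auto
  then show ?thesis unfolding coset_sum_apply[OF h] by (simp add: sum.neutral)
qed

lemma hcomp_coset_sum:
  assumes h: "\<forall>E\<in>cols n l. h E \<in> Hsub n (varpi l)" and C: "C \<in> cols n l"
  shows "hcomp n t l (coset_sum n t l h) C = h C"
proof -
  have unique: "h' C = h C"
    if h': "\<forall>E\<in>cols n l. h' E \<in> Hsub n (varpi l)" and eq: "coset_sum n t l h = coset_sum n t l h'"
    for h'
  proof
    fix v
    show "h' C v = h C v"
    proof (cases "v \<in> stab n (varpi l)")
      case True
      then show ?thesis
        using coset_sum_apply_coset[OF h C True, where t = t]
          coset_sum_apply_coset[OF h' C True, where t = t] eq by simp
    next
      case False
      then show ?thesis using h h' C by (simp add: Hsub_def)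
    qed
  qed
  show ?thesis
    unfolding hcomp_def coset_sum_def[symmetric]
    by (rule the_equality) (use h unique in blast)+
qed

lemma hcomp_eq_restrict:
  assumes g: "g \<in> Hn n" and C: "C \<in> cols n l"
  shows "hcomp n t l g C = (\<lambda>v. if v \<in> stab n (varpi l) then g (ucol n C \<circ> v) else 0)"
proof -
  define h where "h E = (\<lambda>v. if v \<in> stab n (varpi l) then g (ucol n E \<circ> v) else 0)" for E
  have h: "\<forall>E\<in>cols n l. h E \<in> Hsub n (varpi l)" by (simp add: h_def Hsub_def)
  have "g = coset_sum n t l h"
  proof
    fix w
    show "g w = coset_sum n t l h w"
    proof (cases "w \<in> perms n")
      case True
      obtain E v where "E \<in> cols n l" "v \<in> stab n (varpi l)" "w = ucol n E \<circ> v"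
        using coset_decomp_exists[OF colsD(6)[OF C] True] .
      then have "coset_sum n t l h w = h E v" using coset_sum_apply_coset[OF h] by simp
      then show ?thesis using \<open>v \<in> stab n (varpi l)\<close> \<open>w = ucol n E \<circ> v\<close> by (simp add: h_def)
    next
      case False
      then show ?thesis using g coset_sum_apply_notin[OF h] by (simp add: Hn_def)
    qed
  qed
  then have "hcomp n t l g C = h C" using hcomp_coset_sum[OF h C] by simp
  then show ?thesis by (simp add: h_def)
qed

lemma hcomp_onew:
  assumes C: "C \<in> cols n l" and uC: "ucol n C \<in> stab n mu"
    and mu: "\<forall>i\<in>{1..n}. l < i \<longrightarrow> mu i = 0"
  shows "hcomp n t l (onew n mu) C = onew n (\<lambda>i. varpi l i + mu i)"
  unfolding hcomp_eq_restrict[OF onew_in_Hn C]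
  by (auto simp: onew_apply stab_varpi_plus[OF mu] stab_comp_iff[OF uC] stab_perms)

section \<open>The tableaux \<open>T\<^sup>0\<^sub>\<lambda>\<close>\<close>

lemma dominant_nonzero_iff:
  assumes dom: "dominant n mu" and i: "i \<in> {1..n}"
  shows "mu i \<noteq> 0 \<longleftrightarrow> i \<le> partlen n mu"
proof
  assume "mu i \<noteq> 0"
  then have "{1..i} \<subseteq> {j\<in>{1..n}. mu j \<noteq> 0}"
    using dom i by (fastforce simp: dominant_def)
  then show "i \<le> partlen n mu"
    unfolding partlen_def using card_mono[of "{j\<in>{1..n}. mu j \<noteq> 0}" "{1..i}"] by simp
next
  assume le: "i \<le> partlen n mu"
  show "mu i \<noteq> 0"
  proof
    assume "mu i = 0"
    then have "{j\<in>{1..n}. mu j \<noteq> 0} \<subseteq> {1..<i}"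
      using dom i by (fastforce simp: dominant_def not_less)
    then have "partlen n mu \<le> i - 1"
      unfolding partlen_def using card_mono[of "{1..<i}"] by fastforce
    then show False using le i by (cases i) auto
  qed
qed

lemma partlen_le: "partlen n mu \<le> n"
proof -
  have "partlen n mu \<le> card {1..n}" unfolding partlen_def by (rule card_mono) auto
  then show ?thesis by simp
qed

lemma T0_eq_Nil: "lam 1 = 0 \<Longrightarrow> T0 n lam = []"
  by (simp add: T0_def)

lemma T0_eq_Cons:
  assumes "lam 1 \<noteq> 0"
  shows "T0 n lam = [1..<partlen n lam + 1] # T0 n (\<lambda>i. lam i - 1)"
proof -
  obtain k where k: "lam 1 = Suc k" using assms by (cases "lam 1") auto
  define col where "col lam j = [1..<card {i\<in>{1..n}. j \<le> lam i} + 1]" for lam :: "nat \<Rightarrow> nat" and j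
  have T0: "T0 n lam = map (col lam) [1..<lam 1 + 1]" for lam by (simp add: T0_def col_def)
  have "col lam (Suc j) = col (\<lambda>i. lam i - 1) j" if "1 \<le> j" for j
  proof -
    have "{i\<in>{1..n}. Suc j \<le> lam i} = {i\<in>{1..n}. j \<le> lam i - 1}" using that by auto
    then show ?thesis by (simp add: col_def)
  qed
  then have "map (col lam) (map Suc [1..<k + 1]) = map (col (\<lambda>i. lam i - 1)) [1..<k + 1]"
    by (auto simp del: upt_Suc)
  also have "\<dots> = T0 n (\<lambda>i. lam i - 1)"
    using k by (simp add: T0_def col_def del: upt_Suc)
  finally have tail: "map (col lam) (map Suc [1..<k + 1]) = T0 n (\<lambda>i. lam i - 1)" .
  have head: "col lam 1 = [1..<partlen n lam + 1]"
  proof -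
    have "{i\<in>{1..n}. 1 \<le> lam i} = {i\<in>{1..n}. lam i \<noteq> 0}" by auto
    then show ?thesis by (simp add: col_def partlen_def)
  qed
  have "[1..<lam 1 + 1] = 1 # map Suc [1..<k + 1]"
    using k by (simp add: upt_conv_Cons map_Suc_upt del: upt_Suc)
  then show ?thesis by (simp only: T0[of lam] list.map head tail)
qed

lemma upt_cols: "m \<le> n \<Longrightarrow> [1..<m + 1] \<in> cols n m"
  by (auto simp: cols_def simp del: upt_Suc)

lemma ucol_upt:
  assumes "m \<le> n"
  shows "ucol n [1..<m + 1] = id"
proof
  fix k
  have "{1..n} - set [1..<m + 1] = {m + 1..<n + 1}" by auto
  then have "ucol_list n [1..<m + 1] = [1..<m + 1] @ [m + 1..<n + 1]"
    by (simp add: ucol_list_def del: upt_Suc)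
  also have "\<dots> = [1..<n + 1]"
    using upt_add_eq_append[of 1 "m + 1" "n - m"] assms by (simp del: upt_Suc)
  finally show "ucol n [1..<m + 1] k = id k"
    by (cases "1 \<le> k \<and> k \<le> n") (simp_all add: ucol_apply ucol_out nth_upt del: upt_Suc)
qed

lemma sorted_wrt_less_nth_gt:
  fixes xs :: "nat list"
  assumes "sorted_wrt (<) xs" "0 \<notin> set xs" "k < length xs"
  shows "k < xs ! k"
  using assms(3)
proof (induction k)
  case 0
  then have "xs ! 0 \<in> set xs" by simp
  then have "xs ! 0 \<noteq> 0" using assms(2) by metis
  then show ?case by simp
next
  case (Suc k)
  then show ?case using sorted_wrt_nth_less[OF assms(1), of k "Suc k"] by simp
qed

lemma semistandard_T0_ucol_fixed:
  assumes F: "F \<in> cols n l" and dom: "dominant n mu" and pl: "partlen n mu \<le> l"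
    and ss: "semistandard (F # T0 n mu)" and i: "1 \<le> i" "i \<le> partlen n mu"
  shows "ucol n F i = i"
proof -
  have "1 \<in> {1..n}" using i partlen_le[of n mu] by simp
  then have "mu 1 \<noteq> 0" using dominant_nonzero_iff[OF dom] i by simp
  then have T0: "T0 n mu = [1..<partlen n mu + 1] # T0 n (\<lambda>i. mu i - 1)"
    by (rule T0_eq_Cons)
  have "0 < (1::nat) \<and> 1 < length (F # T0 n mu) \<and> i - 1 < length ((F # T0 n mu) ! 1)"
    using T0 i by (simp del: upt_Suc)
  then have "(F # T0 n mu) ! 0 ! (i - 1) \<le> (F # T0 n mu) ! 1 ! (i - 1)"
    using ss[unfolded semistandard_def, rule_format, of 0 1 "i - 1"] by blast
  then have "F ! (i - 1) \<le> i"
    using T0 i by (simp add: nth_upt del: upt_Suc)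
  moreover have "0 \<notin> set F" using colsD(2)[OF F] by auto
  then have "i - 1 < F ! (i - 1)"
    using sorted_wrt_less_nth_gt[OF colsD(1)[OF F]] colsD(3)[OF F] i pl by simp
  ultimately show ?thesis using i pl by (simp add: ucol_apply_le[OF F])
qed

lemma semistandard_T0_ucol_stab:
  assumes F: "F \<in> cols n l" and dom: "dominant n mu" and pl: "partlen n mu \<le> l"
    and ss: "semistandard (F # T0 n mu)"
  shows "ucol n F \<in> stab n mu"
proof (rule stab_if_fixes_support[OF ucol_perms[OF F]], intro ballI impI)
  fix i assume i: "i \<in> {1..n}" and "mu i \<noteq> 0"
  then have "i \<le> partlen n mu" using dominant_nonzero_iff[OF dom i] by simp
  then show "ucol n F i = i" using semistandard_T0_ucol_fixed[OF F dom pl ss] i by simp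
qed

section \<open>The elements \<open>\<Psi>\<^sub>T\<close>\<close>

text \<open>The recursion of \<open>\<Psi>\<close> holds also for a one-column tableau, because the
  \<open>C\<close>-component of \<open>\<Psi>\<^sub>\<emptyset> = \<one>\<^sub>0\<close> is \<open>\<one>\<^bsub>\<varpi>\<^sub>l\<^esub>\<close>.\<close>
lemma Psi_Cons:
  assumes C: "C \<in> cols n l"
  shows "Psi n t (C # S) = sc (t ^ len n (ucol n C))
    (hmul n t (hinv n t (Tb (inv (ucol n C)))) (hcomp n t l (Psi n t S) C))"
proof (cases S)
  case Nil
  have "hcomp n t l (onew n (\<lambda>_. 0)) C = onew n (varpi l)"
    using hcomp_onew[OF C, of "\<lambda>_. 0"] ucol_perms[OF C] by (simp add: stab_def)
  then show ?thesis using Nil colsD(3)[OF C] by simp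
next
  case (Cons D S')
  then show ?thesis using colsD(3)[OF C] by simp
qed

lemma Psi_upt_Cons:
  assumes "m \<le> n"
  shows "Psi n t ([1..<m + 1] # S) = hcomp n t m (Psi n t S) [1..<m + 1]"
  unfolding Psi_Cons[OF upt_cols[OF assms]] ucol_upt[OF assms] by (simp add: hinv_Tb_id)

lemma Psi_T0:
  assumes "dominant n lam"
  shows "Psi n t (T0 n lam) = onew n lam"
  using assms
proof (induction "lam 1" arbitrary: lam)
  case 0
  have "\<forall>i\<in>{1..n}. 0 = lam i"
    using 0 by (auto simp: dominant_def) (metis le_zero_eq order_refl)
  then have "onew n (\<lambda>_. 0) = onew n lam" by (rule onew_cong)
  then show ?case using T0_eq_Nil[of lam n] 0 by simp
next
  case (Suc k)
  define m where "m = partlen n lam"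
  define lam' where "lam' = (\<lambda>i. lam i - 1)"
  have m: "m \<le> n" by (simp add: m_def partlen_le)
  have nonzero: "lam i \<noteq> 0 \<longleftrightarrow> i \<le> m" if "i \<in> {1..n}" for i
    using dominant_nonzero_iff[OF Suc.prems that] by (simp add: m_def)
  have T0: "T0 n lam = [1..<m + 1] # T0 n lam'"
    unfolding m_def lam'_def by (rule T0_eq_Cons) (use Suc.hyps(2) in simp)
  have IH: "Psi n t (T0 n lam') = onew n lam'"
  proof (rule Suc.hyps(1))
    show "k = lam' 1" using Suc.hyps(2) by (simp add: lam'_def)
    show "dominant n lam'"
      using Suc.prems by (auto simp: dominant_def lam'_def intro!: diff_le_mono)
  qed
  have vanish: "\<forall>i\<in>{1..n}. m < i \<longrightarrow> lam' i = 0"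
  proof (intro ballI impI)
    fix i assume "i \<in> {1..n}" "m < i"
    then show "lam' i = 0" using nonzero[of i] by (simp add: lam'_def)
  qed
  have "Psi n t (T0 n lam) = hcomp n t m (onew n lam') [1..<m + 1]"
    by (simp only: T0 Psi_upt_Cons[OF m] IH)
  also have "\<dots> = onew n (\<lambda>i. varpi m i + lam' i)"
    by (rule hcomp_onew[OF upt_cols[OF m] _ vanish]) (simp only: ucol_upt[OF m] id_stab)
  also have "\<dots> = onew n lam"
  proof (rule onew_cong, intro ballI)
    fix i assume "i \<in> {1..n}"
    then show "varpi m i + lam' i = lam i" using nonzero[of i] by (auto simp: varpi_def lam'_def)
  qed
  finally show ?case .
qed

theorem proposition6p1:
  fixes n l :: nat and t :: "'a::comm_ring_1" and mu :: "nat \<Rightarrow> nat" and F :: "nat list"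
  assumes "1 \<le> n" and "t dvd 1"
    and "dominant n mu"
    and "l \<in> {1..n}" and "partlen n mu \<le> l"
    and "F \<in> cols n l"
    and "semistandard (F # T0 n mu)"
  shows "Psi n t (F # T0 n mu) =
           sc (t ^ len n (ucol n F))
             (hmul n t (hinv n t (Tb (inv (ucol n F)))) (onew n (\<lambda>i. varpi l i + mu i)))
       \<and> (\<forall>lam. dominant n lam \<longrightarrow> Psi n t (T0 n lam) = onew n lam)"
proof
  have "ucol n F \<in> stab n mu" by (rule semistandard_T0_ucol_stab[OF assms(6,3,5,7)])
  moreover have "\<forall>i\<in>{1..n}. l < i \<longrightarrow> mu i = 0"
    using dominant_nonzero_iff[OF assms(3)] assms(5) by fastforce
  ultimately show "Psi n t (F # T0 n mu) =
      sc (t ^ len n (ucol n F))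
        (hmul n t (hinv n t (Tb (inv (ucol n F)))) (onew n (\<lambda>i. varpi l i + mu i)))"
    by (simp only: Psi_Cons[OF assms(6)] Psi_T0[OF assms(3)] hcomp_onew[OF assms(6)])
next
  show "\<forall>lam. dominant n lam \<longrightarrow> Psi n t (T0 n lam) = onew n lam"
    using Psi_T0 by blast
qed

end
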